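(* Let $n \ge 3$, fix an integer $\beta > 2$, and let $S_{2,\beta}$ be the set of compositions $\alpha$ of length $n-1$ of the form $\alpha = (2, 1, \ldots, 1, \beta, 1, \ldots, 1)$, with first entry $2$, entry $\beta$ in position $k$ for some $k \in [2, n-1]$, and all other entries $1$. Then for every prime $p$, $$\sum_{\alpha \in S_{2, \beta}} g_\alpha(p) = \frac{p^{n- 3} \big((n - 2) p^{n - 1} - (n - 1) p^{n-2} + 1\big)}{(p - 1)^2}+ (p-1)p^{n-3} \binom{n-1}{2}.$$
   Context: For a composition $\alpha=(e_1,\ldots,e_{n-1})$ (positive integers), $g_\alpha(p)$ is the number of $n\times n$ irreducible subring matrices with diagonal $(p^{e_1},\ldots,p^{e_{n-1}},1)$: upper triangular integer matrices $A$ with $A_{rr}=p^{e_r}$ ($r<n$), $A_{nn}=1$, last column $(1,\ldots,1)^T$, entries $A_{rs}=p\,a_{rs}$ for $1\le r<s\le n-1$ with integers $0\le p\,a_{rs}<p^{e_r}$, such that for all columns $v_i,v_j$ of $A$ the componentwise product $v_i\circ v_j$ lies in the $\mathbb{Z}$-column span of $A$. *)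

theory Defs
  imports Complex_Main "HOL-Computational_Algebra.Primes"
begin

text \<open>A composition alpha = (e_1,...,e_{n-1}) is a list of positive naturals of length n-1.
  Matrices are functions nat => nat => int, indices 0..n-1 (row r, column s), with all
  entries outside this range equal to 0 (so that the set of matrices is finite).
  Index r (0-based) corresponds to index r+1 of the paper.\<close>

definition subring_matrices :: "nat \<Rightarrow> nat list \<Rightarrow> (nat \<Rightarrow> nat \<Rightarrow> int) set" where
  "subring_matrices p e =
    (let n = length e + 1 in
     {A. (\<forall>r s. (r \<ge> n \<or> s \<ge> n) \<longrightarrow> A r s = 0)
       \<and> (\<forall>r<n. \<forall>s<n. s < r \<longrightarrow> A r s = 0)
       \<and> (\<forall>r<n - 1. A r r = int p ^ (e ! r))
       \<and> (\<forall>r<n. A r (n - 1) = 1)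
       \<and> (\<forall>r s. r < s \<and> s < n - 1 \<longrightarrow>
             (\<exists>a::int. A r s = int p * a \<and> 0 \<le> int p * a \<and> int p * a < int p ^ (e ! r)))
       \<and> (\<forall>i<n. \<forall>j<n. \<exists>c::nat \<Rightarrow> int. \<forall>r<n.
             A r i * A r j = (\<Sum>k<n. c k * A r k))})"

definition g :: "nat list \<Rightarrow> nat \<Rightarrow> nat" where
  "g e p = card (subring_matrices p e)"

definition S2beta :: "nat \<Rightarrow> nat \<Rightarrow> nat list set" where
  "S2beta n \<beta> = {\<alpha>. length \<alpha> = n - 1 \<and>
      (\<exists>k\<in>{2..n-1}. \<forall>i<n - 1. \<alpha> ! i = (if i = 0 then 2 else if i = k - 1 then \<beta> else 1))}"

end

theory Submission
  imports Defs "HOL-Library.FuncSet"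
begin

text \<open>
  For the composition with entry 2 at position 0 and \<open>\<beta>\<close> at position m (positions counted
  from 0), a candidate matrix has only two rows not fixed by the diagonal: row 0 (diagonal
  \<open>p\<^sup>2\<close>) and row m (diagonal \<open>p\<^sup>\<beta>\<close>); every other row consists of its diagonal entry p and
  the final 1. Back-substitution shows that all products of columns lie in the column span
  exactly when, writing \<open>A\<^sub>0\<^sub>m = p a\<close> and \<open>A\<^sub>m\<^sub>s = p d\<^sub>s\<close> for m < s < n - 1, we have
  \<open>p\<^sup>q | d\<^sub>i (d\<^sub>j - \<delta>\<^sub>i\<^sub>j)\<close> with q = \<open>\<beta> - 2\<close> if a = 0 and q = \<open>\<beta> - 1\<close> otherwise. Thus the
  residues of the \<open>d\<^sub>s\<close> modulo \<open>p\<^sup>q\<close> are orthogonal idempotents, and since \<open>\<int>/p\<^sup>q\<close> is local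
  they either vanish or form a unit vector. Each residue has p lifts when a = 0, and exactly
  one when a is one of the p - 1 nonzero values; with the \<open>p\<^sup>n\<^sup>-\<^sup>3\<close> free entries of row 0
  this gives g, and summing over m leaves an arithmetico-geometric series.
\<close>

definition in_col_span :: "nat \<Rightarrow> (nat \<Rightarrow> nat \<Rightarrow> 'a::comm_ring_1) \<Rightarrow> (nat \<Rightarrow> 'a) \<Rightarrow> bool" where
  "in_col_span n A v \<longleftrightarrow> (\<exists>c. \<forall>r<n. v r = (\<Sum>k<n. c k * A r k))"

definition closed_under_products :: "nat \<Rightarrow> (nat \<Rightarrow> nat \<Rightarrow> 'a::comm_ring_1) \<Rightarrow> bool" where
  "closed_under_products n A \<longleftrightarrow> (\<forall>i<n. \<forall>j<n. in_col_span n A (\<lambda>r. A r i * A r j))"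

lemma in_col_span_lincomb3:
  assumes "i < n" "k < n" "l < n" and "\<And>r. r < n \<Longrightarrow> v r = a * A r i + b * A r k + c * A r l"
  shows "in_col_span n A v"
  unfolding in_col_span_def
proof (intro exI allI impI)
  fix r assume "r < n"
  then show "v r = (\<Sum>q<n. ((if q = i then a else 0) + (if q = k then b else 0) + (if q = l then c else 0)) * A r q)"
    using assms by (simp add: distrib_right sum.distrib if_distrib[of "\<lambda>x. x * y" for y] cong: if_cong)
qed

definition entrywise :: "(nat \<Rightarrow> nat \<Rightarrow> 'a set) \<Rightarrow> (nat \<Rightarrow> nat \<Rightarrow> 'a) set" where
  "entrywise F = {A. \<forall>r s. A r s \<in> F r s}"

definition entry_set :: "nat \<Rightarrow> nat list \<Rightarrow> nat \<Rightarrow> nat \<Rightarrow> int set" where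
  "entry_set p e r s =
    (let n = length e + 1 in
     if n \<le> r \<or> n \<le> s \<or> s < r then {0}
     else if s = n - 1 then {1}
     else if r = s then {int p ^ (e ! r)}
     else {int p * a |a. 0 \<le> int p * a \<and> int p * a < int p ^ (e ! r)})"

lemma entrywise_entry_set_iff:
  fixes p :: nat and e :: "nat list"
  defines "n \<equiv> length e + 1"
  shows "A \<in> entrywise (entry_set p e) \<longleftrightarrow>
    (\<forall>r s. (r \<ge> n \<or> s \<ge> n) \<longrightarrow> A r s = 0)
    \<and> (\<forall>r<n. \<forall>s<n. s < r \<longrightarrow> A r s = 0)
    \<and> (\<forall>r<n - 1. A r r = int p ^ (e ! r))
    \<and> (\<forall>r<n. A r (n - 1) = 1)
    \<and> (\<forall>r s. r < s \<and> s < n - 1 \<longrightarrow>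
          (\<exists>a. A r s = int p * a \<and> 0 \<le> int p * a \<and> int p * a < int p ^ (e ! r)))"
  (is "_ \<longleftrightarrow> ?shape")
proof
  assume "A \<in> entrywise (entry_set p e)"
  then have A: "A r s \<in> entry_set p e r s" for r s
    unfolding entrywise_def by blast
  note A' = A[unfolded entry_set_def Let_def n_def[symmetric]]
  show ?shape
  proof (intro conjI allI impI)
    fix r s show "r \<ge> n \<or> s \<ge> n \<Longrightarrow> A r s = 0" using A'[of r s] by (auto split: if_split_asm)
    show "r < n \<Longrightarrow> s < n \<Longrightarrow> s < r \<Longrightarrow> A r s = 0" using A'[of r s] by (auto split: if_split_asm)
    show "r < s \<and> s < n - 1 \<Longrightarrow>
          \<exists>a. A r s = int p * a \<and> 0 \<le> int p * a \<and> int p * a < int p ^ (e ! r)"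
      using A'[of r s] by (auto split: if_split_asm)
  next
    fix r show "r < n - 1 \<Longrightarrow> A r r = int p ^ (e ! r)" using A'[of r r] by (auto split: if_split_asm)
    show "r < n \<Longrightarrow> A r (n - 1) = 1" using A'[of r "n - 1"] by (auto split: if_split_asm)
  qed
next
  assume ?shape
  have "A r s \<in> entry_set p e r s" for r s
  proof (cases "n \<le> r \<or> n \<le> s \<or> s < r")
    case True
    then show ?thesis using \<open>?shape\<close> unfolding entry_set_def Let_def n_def[symmetric]
      by (cases "n \<le> r \<or> n \<le> s") (auto simp: not_le)
  next
    case False
    then show ?thesis using \<open>?shape\<close> unfolding entry_set_def Let_def n_def[symmetric]
      by (auto simp: not_le)
  qed
  then show "A \<in> entrywise (entry_set p e)"
    unfolding entrywise_def by blast
qed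

lemma subring_matrices_entrywise:
  "subring_matrices p e = {A \<in> entrywise (entry_set p e). closed_under_products (length e + 1) A}"
  unfolding subring_matrices_def closed_under_products_def in_col_span_def entrywise_entry_set_iff Let_def
  by auto

lemma card_entrywise:
  fixes F :: "nat \<Rightarrow> nat \<Rightarrow> 'a::zero set"
  assumes zero: "\<And>r s. n \<le> r \<or> n \<le> s \<Longrightarrow> F r s = {0}" and fin: "\<And>r s. finite (F r s)"
  shows "finite (entrywise F)" "card (entrywise F) = (\<Prod>r<n. \<Prod>s<n. card (F r s))"
proof -
  define K where "K = {..<n} \<times> {..<n}"
  define D where "D = PiE K (case_prod F)"
  define extend where "extend B r s = (if (r, s) \<in> K then B (r, s) else 0)"
    for B :: "nat \<times> nat \<Rightarrow> 'a" and r s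
  have "A = extend (restrict (case_prod A) K)" if "A \<in> entrywise F" for A
  proof (intro ext)
    fix r s
    have "A r s \<in> F r s"
      using that unfolding entrywise_def by blast
    then show "A r s = extend (restrict (case_prod A) K) r s"
      using zero[of r s] unfolding extend_def K_def by auto
  qed
  moreover have "restrict (case_prod A) K \<in> D" if "A \<in> entrywise F" for A
    using that unfolding D_def entrywise_def by auto
  ultimately have "entrywise F \<subseteq> extend ` D"
    by blast
  moreover have "extend ` D \<subseteq> entrywise F"
    using zero unfolding extend_def D_def K_def entrywise_def by (auto simp: PiE_iff)
  ultimately have image: "entrywise F = extend ` D"
    by blast
  have "inj_on extend D"
  proof
    fix B1 B2 assume B: "B1 \<in> D" "B2 \<in> D" "extend B1 = extend B2"
    show "B1 = B2"
    proof (rule PiE_ext[OF B(1)[unfolded D_def] B(2)[unfolded D_def]])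
      fix x assume "x \<in> K"
      then show "B1 x = B2 x"
        using fun_cong[OF fun_cong[OF B(3), of "fst x"], of "snd x"] unfolding extend_def by simp
    qed
  qed
  then have "card (entrywise F) = card D"
    unfolding image by (rule card_image)
  also have "\<dots> = (\<Prod>r<n. \<Prod>s<n. card (F r s))"
    unfolding D_def K_def by (simp add: card_PiE prod.cartesian_product case_prod_beta')
  finally show "card (entrywise F) = (\<Prod>r<n. \<Prod>s<n. card (F r s))" .
  show "finite (entrywise F)"
    unfolding image D_def K_def using fin by (intro finite_imageI finite_PiE) auto
qed

lemma prod_if_const: "finite A \<Longrightarrow> (\<Prod>x\<in>A. if x \<in> S then c else 1) = c ^ card (A \<inter> S)"
  by (simp add: prod.If_cases Int_def)

definition pair_condition :: "int \<Rightarrow> nat \<Rightarrow> nat \<Rightarrow> (nat \<Rightarrow> nat \<Rightarrow> int) \<Rightarrow> nat \<Rightarrow> nat \<Rightarrow> bool" where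
  "pair_condition P m \<beta> A i j \<longleftrightarrow>
     (\<exists>t. A m i * (A m j - (if i = j then P else 0)) = P ^ \<beta> * t \<and> P\<^sup>2 dvd t * A 0 m)"

definition product_condition :: "int \<Rightarrow> nat \<Rightarrow> nat \<Rightarrow> nat \<Rightarrow> (nat \<Rightarrow> nat \<Rightarrow> int) \<Rightarrow> bool" where
  "product_condition P n m \<beta> A \<longleftrightarrow>
     (\<forall>i\<in>{m<..<n - 1}. \<forall>j\<in>{m<..<n - 1}. pair_condition P m \<beta> A i j)"

locale two_row_matrix =
  fixes P :: int and n m \<beta> :: nat and A :: "nat \<Rightarrow> nat \<Rightarrow> int"
  assumes P_nonzero: "P \<noteq> 0" and m_pos: "0 < m" and m_less: "m < n - 1" and beta_ge: "2 \<le> \<beta>"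
    and lower: "\<And>r s. s < r \<Longrightarrow> A r s = 0"
    and last_col: "\<And>r. r < n \<Longrightarrow> A r (n - 1) = 1"
    and diag_0: "A 0 0 = P\<^sup>2" and diag_m: "A m m = P ^ \<beta>"
    and diag_plain: "\<And>r. 0 < r \<Longrightarrow> r < n - 1 \<Longrightarrow> r \<noteq> m \<Longrightarrow> A r r = P"
    and upper_plain: "\<And>r s. 0 < r \<Longrightarrow> r \<noteq> m \<Longrightarrow> r < s \<Longrightarrow> s < n - 1 \<Longrightarrow> A r s = 0"
    and row_0_dvd: "\<And>s. 0 < s \<Longrightarrow> s < n - 1 \<Longrightarrow> P dvd A 0 s"
    and row_m_dvd: "\<And>s. m < s \<Longrightarrow> s < n - 1 \<Longrightarrow> P dvd A m s"
begin

lemma plain_row_entry: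
  assumes "0 < r" "r \<noteq> m" "k < n - 1"
  shows "A r k = (if r = k then P else 0)"
  using assms diag_plain lower upper_plain by (cases r k rule: linorder_cases) auto

lemma col_0_entry: "A r 0 = (if r = 0 then P\<^sup>2 else 0)"
  using diag_0 lower by simp

lemma pair_condition_if_le_m:
  assumes ij: "0 < i" "i < n - 1" "0 < j" "j < n - 1" and "i \<le> m \<or> j \<le> m"
  shows "pair_condition P m \<beta> A i j"
proof -
  define \<delta> where "\<delta> = (if i = j then P else 0)"
  have "P\<^sup>2 dvd P ^ \<beta>"
    using beta_ge by (simp add: le_imp_power_dvd)
  have P_dvd_row_m: "P dvd A m s" if "0 < s" "s < n - 1" for s
    using row_m_dvd[of s] diag_m beta_ge lower[of s m] that by (cases m s rule: linorder_cases) auto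
  then have P_dvd_t: "P * P dvd t * A 0 m" if "P dvd t" for t
    using that row_0_dvd[of m] m_pos m_less by (simp add: mult_dvd_mono)
  consider "A m i * (A m j - \<delta>) = 0" | "i = m" | "j = m" "m < i"
    using assms lower[of i m] lower[of j m] unfolding \<delta>_def by fastforce
  then show ?thesis
  proof cases
    case 1
    then show ?thesis unfolding pair_condition_def \<delta>_def[symmetric] by (intro exI[of _ 0]) simp
  next
    case 2
    have "P dvd A m j - \<delta>"
      using P_dvd_row_m[of j] ij unfolding \<delta>_def by auto
    then show ?thesis
      using 2 diag_m P_dvd_t unfolding pair_condition_def \<delta>_def[symmetric]
      by (intro exI[of _ "A m j - \<delta>"]) (simp add: power2_eq_square)
  next
    case 3
    then show ?thesis
      using diag_m P_dvd_t P_dvd_row_m[of i] ij unfolding pair_condition_def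
      by (intro exI[of _ "A m i"]) (simp add: power2_eq_square)
  qed
qed

lemma product_in_col_span:
  assumes ij: "0 < i" "i < n - 1" "0 < j" "j < n - 1" and "pair_condition P m \<beta> A i j"
  shows "in_col_span n A (\<lambda>r. A r i * A r j)"
proof -
  define \<delta> where "\<delta> = (if i = j then P else 0)"
  obtain t where t: "A m i * (A m j - \<delta>) = P ^ \<beta> * t" and "P\<^sup>2 dvd t * A 0 m"
    using assms(5) unfolding pair_condition_def \<delta>_def by blast
  have "P\<^sup>2 dvd A 0 i * A 0 j - \<delta> * A 0 i - t * A 0 m"
  proof (intro dvd_diff)
    show "P\<^sup>2 dvd A 0 i * A 0 j"
      using row_0_dvd[of i] row_0_dvd[of j] ij by (simp add: power2_eq_square mult_dvd_mono)
    show "P\<^sup>2 dvd \<delta> * A 0 i"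
      using row_0_dvd[of i] ij unfolding \<delta>_def by (simp add: power2_eq_square mult_dvd_mono)
  qed fact
  then obtain u where u: "A 0 i * A 0 j - \<delta> * A 0 i - t * A 0 m = P\<^sup>2 * u" ..
  have plain_rows: "A r i * A r j = \<delta> * A r i" if "0 < r" "r \<noteq> m" for r
    using plain_row_entry[OF that] ij unfolding \<delta>_def by simp
  show ?thesis
  proof (rule in_col_span_lincomb3[of i n m 0 _ \<delta> _ t u])
    fix r assume "r < n"
    show "A r i * A r j = \<delta> * A r i + t * A r m + u * A r 0"
      using t u plain_rows[of r] plain_row_entry[of r m] m_less diag_m col_0_entry[of r]
      by (cases "r = 0"; cases "r = m") (auto simp: algebra_simps)
  qed (use ij m_less in auto)
qed

lemma product_with_boundary_col_in_col_span:
  assumes "i < n" "j = 0 \<or> j = n - 1"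
  shows "in_col_span n A (\<lambda>r. A r i * A r j)"
  using assms(2)
proof
  assume "j = 0"
  show ?thesis
    by (rule in_col_span_lincomb3[of 0 n 0 0 _ "A 0 i" _ 0 0])
      (use \<open>j = 0\<close> assms(1) col_0_entry in auto)
next
  assume "j = n - 1"
  show ?thesis
    by (rule in_col_span_lincomb3[of i n i i _ 1 _ 0 0]) (use \<open>j = n - 1\<close> assms(1) last_col in auto)
qed

lemma closed_under_products_if_product_condition:
  assumes "product_condition P n m \<beta> A"
  shows "closed_under_products n A"
  unfolding closed_under_products_def
proof (intro allI impI)
  fix i j assume "i < n" "j < n"
  show "in_col_span n A (\<lambda>r. A r i * A r j)"
  proof (cases "i \<in> {0, n - 1} \<or> j \<in> {0, n - 1}")
    case True
    have swap: "(\<lambda>r. A r j * A r i) = (\<lambda>r. A r i * A r j)"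
      by (simp add: mult.commute)
    from True show ?thesis
    proof
      assume "j \<in> {0, n - 1}"
      then show ?thesis
        using \<open>i < n\<close> product_with_boundary_col_in_col_span by blast
    next
      assume "i \<in> {0, n - 1}"
      then show ?thesis
        using \<open>j < n\<close> product_with_boundary_col_in_col_span[of j i] swap by simp
    qed
  next
    case False
    then have ij: "0 < i" "i < n - 1" "0 < j" "j < n - 1"
      using \<open>i < n\<close> \<open>j < n\<close> by auto
    have "pair_condition P m \<beta> A i j"
      using assms pair_condition_if_le_m[OF ij] ij unfolding product_condition_def
      by (cases "i \<le> m \<or> j \<le> m") auto
    then show ?thesis by (rule product_in_col_span[OF ij])
  qed
qed

lemma row_sum_plain_row:
  assumes "0 < r" "r \<noteq> m" "r < n - 1"
  shows "(\<Sum>k<n. c k * A r k) = c r * P + c (n - 1)"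
proof -
  have "(\<Sum>k<n. c k * A r k) = (\<Sum>k\<in>{r, n - 1}. c k * A r k)"
    by (rule sum.mono_neutral_right) (use assms plain_row_entry lower in \<open>auto simp: not_less\<close>)
  also have "\<dots> = c r * P + c (n - 1)"
    using assms diag_plain last_col by simp
  finally show ?thesis .
qed

lemma row_sum_last_row: "(\<Sum>k<n. c k * A (n - 1) k) = c (n - 1)"
proof -
  have "(\<Sum>k<n. c k * A (n - 1) k) = (\<Sum>k\<in>{n - 1}. c k * A (n - 1) k)"
    by (rule sum.mono_neutral_right) (use m_less lower in auto)
  then show ?thesis
    using last_col m_less by simp
qed

lemma row_sum_sparse:
  assumes i: "m < i" "i < n - 1" and c: "\<And>k. k < n - 1 \<Longrightarrow> k \<noteq> 0 \<Longrightarrow> k \<noteq> m \<Longrightarrow> c k = (if k = i then \<delta> else 0)"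
  shows "(\<Sum>k<n. c k * A r k) = c 0 * A r 0 + c m * A r m + \<delta> * A r i + c (n - 1) * A r (n - 1)"
proof -
  have "(\<Sum>k<n. c k * A r k) = (\<Sum>k\<in>{0, m, i, n - 1}. c k * A r k)"
    by (rule sum.mono_neutral_right) (use i m_less c in auto)
  then show ?thesis
    using i m_pos c[of i] by (simp add: algebra_simps)
qed

lemma pair_condition_if_in_col_span:
  assumes ij: "m < i" "i < n - 1" "m < j" "j < n - 1"
    and span: "in_col_span n A (\<lambda>r. A r i * A r j)"
  shows "pair_condition P m \<beta> A i j"
proof -
  define \<delta> where "\<delta> = (if i = j then P else 0)"
  obtain c where c: "\<And>r. r < n \<Longrightarrow> A r i * A r j = (\<Sum>k<n. c k * A r k)"
    using span unfolding in_col_span_def by blast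
  \<comment> \<open>back-substitution: the last row and the plain rows determine every coefficient except
    \<open>c 0\<close> and \<open>c m\<close>; row m then exhibits \<open>c m\<close> as the witness t\<close>
  have c_last: "c (n - 1) = 0"
    using c[of "n - 1"] row_sum_last_row lower[of i "n - 1"] ij by simp
  have c_plain: "c k = (if k = i then \<delta> else 0)" if k: "k < n - 1" "k \<noteq> 0" "k \<noteq> m" for k
  proof -
    have "c k * P = A k i * A k j"
      using c[of k] row_sum_plain_row[of k c] k c_last by simp
    also have "\<dots> = (if k = i then \<delta> else 0) * P"
      using plain_row_entry[of k i] plain_row_entry[of k j] k ij unfolding \<delta>_def by auto
    finally show ?thesis
      using P_nonzero by simp
  qed
  note rows = row_sum_sparse[OF ij(1,2) c_plain]
  have "A m i * A m j = c m * P ^ \<beta> + \<delta> * A m i"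
    using c[of m] rows[of m] m_less diag_m col_0_entry[of m] m_pos c_last by simp
  then have "A m i * (A m j - \<delta>) = P ^ \<beta> * c m"
    by (simp add: algebra_simps)
  moreover have "P\<^sup>2 dvd c m * A 0 m"
  proof -
    have "A 0 i * A 0 j = c 0 * P\<^sup>2 + c m * A 0 m + \<delta> * A 0 i"
      using c[of 0] rows[of 0] m_less diag_0 c_last by simp
    then have "c m * A 0 m = A 0 i * A 0 j - \<delta> * A 0 i - P\<^sup>2 * c 0"
      by (simp add: algebra_simps)
    moreover have "P\<^sup>2 dvd A 0 i * A 0 j - \<delta> * A 0 i - P\<^sup>2 * c 0"
      using row_0_dvd[of i] row_0_dvd[of j] ij m_pos unfolding \<delta>_def
      by (intro dvd_diff) (auto simp: power2_eq_square mult_dvd_mono)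
    ultimately show ?thesis by simp
  qed
  ultimately show ?thesis
    unfolding pair_condition_def \<delta>_def by blast
qed

theorem closed_under_products_iff: "closed_under_products n A \<longleftrightarrow> product_condition P n m \<beta> A"
  using closed_under_products_if_product_condition pair_condition_if_in_col_span
  unfolding closed_under_products_def product_condition_def by auto

end

lemma prime_power_dvd_mult_coprime:
  fixes p a b :: int
  assumes p: "prime p" and ab: "coprime a b" and dvd: "p ^ e dvd a * b"
  shows "p ^ e dvd a \<or> p ^ e dvd b"
proof -
  have p': "prime_elem p"
    using p by (rule prime_imp_prime_elem)
  have "\<not> (p dvd a \<and> p dvd b)"
    using ab p coprime_common_divisor not_prime_unit by blast
  then consider "e = 0" | "0 < e" "\<not> p dvd b" | "0 < e" "\<not> p dvd a"
    by blast
  then show ?thesis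
    by cases (use prime_power_dvd_multD[OF p', of e a b] prime_power_dvd_multD[OF p', of e b a] dvd
        in \<open>auto simp: mult.commute\<close>)
qed

lemma dvd_pred_if_mod_eq_1:
  fixes Q d :: int
  assumes "d mod Q = 1"
  shows "Q dvd d - 1"
proof -
  have "d - 1 = Q * (d div Q)"
    using mult_div_mod_eq[of Q d] assms by simp
  then show ?thesis ..
qed

lemma prime_power_gt_1:
  fixes p :: int
  assumes "prime p" "0 < e"
  shows "1 < p ^ e"
  using one_less_power[OF prime_gt_1_int[OF assms(1)] assms(2)] .

lemma idempotent_mod_prime_power:
  fixes p d :: int
  assumes p: "prime p" and e: "0 < e" and idem: "p ^ e dvd d * (d - 1)"
  shows "d mod p ^ e = 0 \<or> d mod p ^ e = 1"
proof -
  have "p ^ e dvd d \<or> p ^ e dvd d - 1"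
    using idem by (rule prime_power_dvd_mult_coprime[OF p coprime_doff_one_right])
  then show ?thesis
  proof
    assume "p ^ e dvd d - 1"
    then have "d mod p ^ e = 1 mod p ^ e"
      by (simp only: mod_eq_dvd_iff)
    then show ?thesis
      using prime_power_gt_1[OF p e] by simp
  qed (simp add: dvd_eq_mod_eq_0)
qed

lemma orthogonal_if_unit_vector:
  fixes Q :: int and d :: "nat \<Rightarrow> int"
  assumes unit: "\<And>j. j \<in> J \<Longrightarrow> d j mod Q = (if j = j0 then 1 else 0)"
  shows "\<forall>i\<in>J. \<forall>j\<in>J. Q dvd d i * (d j - (if i = j then 1 else 0))"
proof (intro ballI)
  fix i j assume "i \<in> J" "j \<in> J"
  show "Q dvd d i * (d j - (if i = j then 1 else 0))"
  proof (cases "i = j0")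
    case True
    have "Q dvd d j - (if i = j then 1 else 0)"
    proof (cases "i = j")
      case False
      then show ?thesis
        using unit[OF \<open>j \<in> J\<close>] True by (simp add: dvd_eq_mod_eq_0)
    qed (use unit[OF \<open>j \<in> J\<close>] True dvd_pred_if_mod_eq_1 in simp)
    then show ?thesis by simp
  next
    case False
    then have "Q dvd d i"
      using unit[OF \<open>i \<in> J\<close>] by (simp add: dvd_eq_mod_eq_0)
    then show ?thesis
      by (rule dvd_mult2)
  qed
qed

lemma mod_eq_1_unique_if_dvd_mult:
  fixes Q x y :: int
  assumes "1 < Q" "Q dvd x * y" "x mod Q = 1"
  shows "y mod Q \<noteq> 1"
proof
  assume "y mod Q = 1"
  then have "(1::int) = (x mod Q * (y mod Q)) mod Q"
    using assms(1,3) by simp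
  also have "\<dots> = (x * y) mod Q"
    by (rule mod_mult_eq)
  also have "\<dots> = 0"
    using assms(2) by simp
  finally show False
    by simp
qed

lemma unit_vector_if_orthogonal_mod_prime_power:
  fixes p :: int and d :: "nat \<Rightarrow> int"
  assumes p: "prime p" and e: "0 < e" and z: "z \<notin> J"
    and orth: "\<forall>i\<in>J. \<forall>j\<in>J. p ^ e dvd d i * (d j - (if i = j then 1 else 0))"
  shows "\<exists>j0\<in>insert z J. \<forall>j\<in>J. d j mod p ^ e = (if j = j0 then 1 else 0)"
proof -
  have idem: "d j mod p ^ e = 0 \<or> d j mod p ^ e = 1" if "j \<in> J" for j
  proof (rule idempotent_mod_prime_power[OF p e])
    have "p ^ e dvd d j * (d j - (if j = j then 1 else 0))"
      using orth that by blast
    then show "p ^ e dvd d j * (d j - 1)"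
      by simp
  qed
  show ?thesis
  proof (cases "\<exists>j0\<in>J. d j0 mod p ^ e = 1")
    case True
    then obtain j0 where j0: "j0 \<in> J" "d j0 mod p ^ e = 1" ..
    have "d j mod p ^ e = (if j = j0 then 1 else 0)" if "j \<in> J" for j
    proof (cases "j = j0")
      case False
      have "p ^ e dvd d j0 * (d j - (if j0 = j then 1 else 0))"
        using orth j0(1) that by blast
      then have "d j mod p ^ e \<noteq> 1"
        using False j0(2) prime_power_gt_1[OF p e] by (intro mod_eq_1_unique_if_dvd_mult) auto
      then show ?thesis
        using idem[OF that] False by simp
    qed (use j0(2) in simp)
    then show ?thesis
      using j0(1) by blast
  next
    case False
    have "d j mod p ^ e = (if j = z then 1 else 0)" if "j \<in> J" for j
    proof -
      have "d j mod p ^ e \<noteq> 1" "j \<noteq> z"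
        using False that z by auto
      then show ?thesis
        using idem[OF that] by simp
    qed
    then show ?thesis
      by blast
  qed
qed

lemma orthogonal_idempotents_mod_prime_power:
  fixes p :: int and d :: "nat \<Rightarrow> int"
  assumes "prime p" and "0 < e" and "z \<notin> J"
  shows "(\<forall>i\<in>J. \<forall>j\<in>J. p ^ e dvd d i * (d j - (if i = j then 1 else 0))) \<longleftrightarrow>
         (\<exists>j0\<in>insert z J. \<forall>j\<in>J. d j mod p ^ e = (if j = j0 then 1 else 0))"
  using unit_vector_if_orthogonal_mod_prime_power[OF assms] orthogonal_if_unit_vector by blast

lemma pair_condition_scaled_iff:
  fixes P a X :: int
  assumes P: "prime P" and \<beta>: "2 \<le> \<beta>" and a: "0 \<le> a" "a < P"
  shows "(\<exists>t. P\<^sup>2 * X = P ^ \<beta> * t \<and> P\<^sup>2 dvd t * (P * a)) \<longleftrightarrow>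
         P ^ (if a = 0 then \<beta> - 2 else \<beta> - 1) dvd X"
proof -
  have "P \<noteq> 0"
    using P by auto
  have "P ^ \<beta> = P\<^sup>2 * P ^ (\<beta> - 2)"
    using \<beta> by (metis le_add_diff_inverse power_add)
  then have quotient: "P\<^sup>2 * X = P ^ \<beta> * t \<longleftrightarrow> X = P ^ (\<beta> - 2) * t" for t
    using \<open>P \<noteq> 0\<close> by (simp add: mult.assoc)
  show ?thesis
  proof (cases "a = 0")
    case True
    then show ?thesis
      using quotient by (auto simp: dvd_def)
  next
    case False
    then have "\<not> P dvd a"
      using a zdvd_imp_le by fastforce
    then have "P\<^sup>2 dvd t * (P * a) \<longleftrightarrow> P dvd t" for t
      using \<open>P \<noteq> 0\<close> P by (simp add: power2_eq_square ac_simps prime_dvd_mult_iff)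
    moreover have "P ^ (\<beta> - 1) = P ^ (\<beta> - 2) * P"
      using \<beta> by (simp flip: power_Suc2 add: Suc_diff_Suc numeral_2_eq_2)
    ultimately show ?thesis
      using quotient False by (auto simp: dvd_def mult.assoc)
  qed
qed

lemma card_residue_class:
  fixes q c N :: int
  assumes "0 \<le> c" "c < q"
  shows "card {d. 0 \<le> d \<and> d < q * N \<and> d mod q = c} = nat N"
proof -
  have "{d. 0 \<le> d \<and> d < q * N \<and> d mod q = c} = (\<lambda>t. c + q * t) ` {0..<N}"
  proof (intro set_eqI iffI)
    fix d assume "d \<in> {d. 0 \<le> d \<and> d < q * N \<and> d mod q = c}"
    then have d: "0 \<le> d" "d < q * N" "d mod q = c" by auto
    have split: "q * (d div q) + c = d"
      using d(3) mult_div_mod_eq[of q d] by simp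
    then have "d = c + q * (d div q)"
      by simp
    moreover have "q * (d div q) < q * N"
      using split d(2) assms(1) by linarith
    then have "d div q < N"
      using assms by simp
    moreover have "0 \<le> d div q"
      using d assms by (simp add: pos_imp_zdiv_nonneg_iff)
    ultimately show "d \<in> (\<lambda>t. c + q * t) ` {0..<N}"
      by (intro image_eqI[of _ _ "d div q"]) auto
  next
    fix d assume "d \<in> (\<lambda>t. c + q * t) ` {0..<N}"
    then obtain t where "t \<in> {0..<N}" "d = c + q * t" ..
    then have t: "d = c + q * t" "0 \<le> t" "t < N"
      by auto
    have "q * (t + 1) \<le> q * N"
      using t assms by (intro mult_left_mono) auto
    then show "d \<in> {d. 0 \<le> d \<and> d < q * N \<and> d mod q = c}"
      using t assms by (auto simp: algebra_simps)
  qed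
  moreover have "inj_on (\<lambda>t. c + q * t) {0..<N}"
    using assms by (auto intro: inj_onI)
  ultimately show ?thesis
    by (simp add: card_image)
qed

text \<open>\<open>two_beta_composition n \<beta> m\<close> has \<open>\<beta>\<close> at the 0-based position m, i.e.\ at position k = m + 1
  in the notation of \<open>S2beta\<close>.\<close>

definition two_beta_composition :: "nat \<Rightarrow> nat \<Rightarrow> nat \<Rightarrow> nat list" where
  "two_beta_composition n \<beta> m = map (\<lambda>i. if i = 0 then 2 else if i = m then \<beta> else 1) [0..<n - 1]"

locale two_beta_setting =
  fixes p n m \<beta> :: nat
  assumes p: "prime p" and m_pos: "0 < m" and m_less: "m < n - 1" and \<beta>: "2 < \<beta>"
begin

abbreviation P :: int where "P \<equiv> int p"
abbreviation e :: "nat list" where "e \<equiv> two_beta_composition n \<beta> m"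
abbreviation E :: "nat \<Rightarrow> nat \<Rightarrow> int set" where "E \<equiv> entry_set p e"

lemma P_ge_2: "2 \<le> P"
  using prime_ge_2_nat[OF p] by simp

lemma length_e: "length e + 1 = n"
  using m_less by (simp add: two_beta_composition_def)

lemma nth_e: "r < n - 1 \<Longrightarrow> e ! r = (if r = 0 then 2 else if r = m then \<beta> else 1)"
  by (simp add: two_beta_composition_def)

lemma E_zero: "s < r \<or> n \<le> r \<or> n \<le> s \<Longrightarrow> E r s = {0}"
  unfolding entry_set_def Let_def length_e by auto

lemma E_last: "r < n \<Longrightarrow> E r (n - 1) = {1}"
  unfolding entry_set_def Let_def length_e by auto

lemma E_diag: "r < n - 1 \<Longrightarrow> E r r = {P ^ (e ! r)}"
  unfolding entry_set_def Let_def length_e by auto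

lemma E_upper: "r < s \<Longrightarrow> s < n - 1 \<Longrightarrow> E r s = {P * a |a. 0 \<le> P * a \<and> P * a < P ^ (e ! r)}"
  unfolding entry_set_def Let_def length_e by auto

lemma E_upper_multiple:
  assumes "A r s \<in> E r s" "r < s" "s < n - 1"
  obtains a where "A r s = P * a" "0 \<le> a" "a < P ^ (e ! r - 1)"
proof -
  have "0 < e ! r"
    using assms \<beta> by (simp add: nth_e)
  then have "P ^ (e ! r) = P * P ^ (e ! r - 1)"
    by (simp flip: power_Suc)
  then show ?thesis
    using assms E_upper[of r s] P_ge_2 that by (auto simp: zero_le_mult_iff)
qed

lemma mem_E_upper:
  assumes "r < s" "s < n - 1" "0 \<le> a" "a < P ^ (e ! r - 1)"
  shows "P * a \<in> E r s"
proof -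
  have "0 < e ! r"
    using assms(1,2) \<beta> by (simp add: nth_e)
  then have "P ^ (e ! r) = P * P ^ (e ! r - 1)"
    by (simp flip: power_Suc)
  then have "P * a < P ^ (e ! r)"
    using assms(4) P_ge_2 by simp
  then show ?thesis
    using assms(3) P_ge_2 E_upper[OF assms(1,2)] by auto
qed

lemma two_row_matrix_if_entrywise:
  assumes "A \<in> entrywise E"
  shows "two_row_matrix P n m \<beta> A"
proof -
  have A: "A r s \<in> E r s" for r s
    using assms unfolding entrywise_def by blast
  show ?thesis
  proof
    show "P \<noteq> 0" "0 < m" "m < n - 1" "2 \<le> \<beta>"
      using P_ge_2 m_pos m_less \<beta> by auto
  next
    fix r s :: nat
    show "s < r \<Longrightarrow> A r s = 0"
      using A[of r s] E_zero by auto
    assume "0 < r" "r \<noteq> m" "r < s" "s < n - 1"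
    then show "A r s = 0"
      using nth_e[of r] by (auto elim: E_upper_multiple[of A r s, OF A])
  next
    fix r
    show "r < n \<Longrightarrow> A r (n - 1) = 1"
      using A[of r "n - 1"] E_last by auto
    show "0 < r \<Longrightarrow> r < n - 1 \<Longrightarrow> r \<noteq> m \<Longrightarrow> A r r = P"
      using A[of r r] E_diag nth_e by auto
  next
    show "A 0 0 = P\<^sup>2" "A m m = P ^ \<beta>"
      using A[of 0 0] A[of m m] E_diag nth_e m_pos m_less by auto
  next
    fix s
    show "0 < s \<Longrightarrow> s < n - 1 \<Longrightarrow> P dvd A 0 s" "m < s \<Longrightarrow> s < n - 1 \<Longrightarrow> P dvd A m s"
      by (auto elim: E_upper_multiple[of A 0 s, OF A] E_upper_multiple[of A m s, OF A])
  qed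
qed

lemma subring_matrices_eq:
  "subring_matrices p e = {A \<in> entrywise E. product_condition P n m \<beta> A}"
  unfolding subring_matrices_entrywise length_e
  using two_row_matrix.closed_under_products_iff[OF two_row_matrix_if_entrywise] by blast

abbreviation J :: "nat set" where "J \<equiv> {m<..<n - 1}"

lemma row_m_entry:
  assumes "A \<in> entrywise E" "s \<in> J"
  shows "A m s = P * (A m s div P)" "0 \<le> A m s div P" "A m s div P < P ^ (\<beta> - 1)"
proof -
  have "A m s \<in> E m s"
    using assms(1) unfolding entrywise_def by blast
  then obtain d where "A m s = P * d" "0 \<le> d" "d < P ^ (e ! m - 1)"
    by (rule E_upper_multiple[of A m s]) (use assms(2) in auto)
  moreover have "e ! m = \<beta>"
    using nth_e[of m] m_pos m_less by simp
  ultimately show "A m s = P * (A m s div P)" "0 \<le> A m s div P" "A m s div P < P ^ (\<beta> - 1)"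
    using P_ge_2 by auto
qed

lemma corner_entry:
  assumes "A \<in> entrywise E"
  shows "A 0 m = P * (A 0 m div P)" "0 \<le> A 0 m div P" "A 0 m div P < P"
proof -
  have "A 0 m \<in> E 0 m"
    using assms(1) unfolding entrywise_def by blast
  then obtain a where "A 0 m = P * a" "0 \<le> a" "a < P ^ (e ! 0 - 1)"
    by (rule E_upper_multiple[of A 0 m]) (use m_pos m_less in auto)
  moreover have "e ! 0 = 2"
    using nth_e[of 0] m_less by simp
  ultimately show "A 0 m = P * (A 0 m div P)" "0 \<le> A 0 m div P" "A 0 m div P < P"
    using P_ge_2 by auto
qed

text \<open>The index \<open>j0 = 0\<close>, which never lies in J, encodes the all-zero residue vector.\<close>

lemma product_condition_iff_residues:
  assumes A: "A \<in> entrywise E"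
  defines "q \<equiv> if A 0 m = 0 then \<beta> - 2 else \<beta> - 1"
  shows "product_condition P n m \<beta> A \<longleftrightarrow>
    (\<exists>j0\<in>insert 0 J. \<forall>j\<in>J. (A m j div P) mod P ^ q = (if j = j0 then 1 else 0))"
proof -
  define d where "d j = A m j div P" for j
  define a where "a = A 0 m div P"
  have q: "q = (if a = 0 then \<beta> - 2 else \<beta> - 1)"
    unfolding q_def a_def using corner_entry[OF A] by auto
  have row_m: "A m j = P * d j" if "j \<in> J" for j
    using row_m_entry(1)[OF A that] unfolding d_def .
  have "A m i * (A m j - (if i = j then P else 0)) = P\<^sup>2 * (d i * (d j - (if i = j then 1 else 0)))"
    if "i \<in> J" "j \<in> J" for i j
    unfolding row_m[OF that(1)] row_m[OF that(2)] by (simp add: power2_eq_square algebra_simps)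
  then have "product_condition P n m \<beta> A \<longleftrightarrow>
      (\<forall>i\<in>J. \<forall>j\<in>J. P ^ q dvd d i * (d j - (if i = j then 1 else 0)))"
    unfolding product_condition_def pair_condition_def q
    using pair_condition_scaled_iff[of P \<beta> a] p \<beta> corner_entry[OF A] unfolding a_def
    by (simp add: less_imp_le)
  also have "\<dots> \<longleftrightarrow> (\<exists>j0\<in>insert 0 J. \<forall>j\<in>J. d j mod P ^ q = (if j = j0 then 1 else 0))"
    by (rule orthogonal_idempotents_mod_prime_power) (use p \<beta> q in auto)
  finally show ?thesis
    unfolding d_def .
qed

definition residue_lifts :: "nat \<Rightarrow> nat \<Rightarrow> int set" where
  "residue_lifts j0 s =
     {P * d |d. 0 \<le> d \<and> d < P ^ (\<beta> - 1) \<and> d mod P ^ (\<beta> - 2) = (if s = j0 then 1 else 0)}"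

definition nonzero_multiples :: "int set" where
  "nonzero_multiples = {P * a |a. 0 < a \<and> a < P}"

definition unit_entries :: "nat \<Rightarrow> nat \<Rightarrow> int set" where
  "unit_entries j0 s = {if s = j0 then P else 0}"

lemma product_condition_iff:
  assumes A: "A \<in> entrywise E"
  shows "product_condition P n m \<beta> A \<longleftrightarrow>
    A 0 m = 0 \<and> (\<exists>j0\<in>insert 0 J. \<forall>s\<in>J. A m s \<in> residue_lifts j0 s) \<or>
    A 0 m \<in> nonzero_multiples \<and> (\<exists>j0\<in>insert 0 J. \<forall>s\<in>J. A m s \<in> unit_entries j0 s)"
proof (cases "A 0 m = 0")
  case True
  have "A m s \<in> residue_lifts j0 s \<longleftrightarrow> (A m s div P) mod P ^ (\<beta> - 2) = (if s = j0 then 1 else 0)"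
    if "s \<in> J" for s j0
    using row_m_entry[OF A that] P_ge_2 unfolding residue_lifts_def by auto
  moreover have "A 0 m \<notin> nonzero_multiples"
    using True P_ge_2 unfolding nonzero_multiples_def by auto
  ultimately show ?thesis
    using product_condition_iff_residues[OF A] True by simp
next
  case False
  have "A m s \<in> unit_entries j0 s \<longleftrightarrow> (A m s div P) mod P ^ (\<beta> - 1) = (if s = j0 then 1 else 0)"
    if "s \<in> J" for s j0
    using row_m_entry[OF A that] P_ge_2 unfolding unit_entries_def by auto
  moreover have "A 0 m div P \<noteq> 0"
    using corner_entry(1)[OF A] False by (metis mult_zero_right)
  then have "A 0 m \<in> nonzero_multiples"
    using corner_entry[OF A] unfolding nonzero_multiples_def by (auto intro!: exI[of _ "A 0 m div P"])
  ultimately show ?thesis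
    using product_condition_iff_residues[OF A] False by simp
qed

definition restricted_entries :: "int set \<Rightarrow> (nat \<Rightarrow> int set) \<Rightarrow> nat \<Rightarrow> nat \<Rightarrow> int set" where
  "restricted_entries X Y r s = (if r = 0 \<and> s = m then X else if r = m \<and> s \<in> J then Y s else E r s)"

lemma mem_entrywise_restricted_entries:
  assumes "X \<subseteq> E 0 m" and "\<And>s. s \<in> J \<Longrightarrow> Y s \<subseteq> E m s"
  shows "A \<in> entrywise (restricted_entries X Y) \<longleftrightarrow>
    A \<in> entrywise E \<and> A 0 m \<in> X \<and> (\<forall>s\<in>J. A m s \<in> Y s)"
proof
  assume "A \<in> entrywise (restricted_entries X Y)"
  then have A: "A r s \<in> restricted_entries X Y r s" for r s
    unfolding entrywise_def by blast
  have "A r s \<in> E r s" for r s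
    using A[of r s] assms unfolding restricted_entries_def by (auto split: if_splits)
  moreover have "A 0 m \<in> X"
    using A[of 0 m] unfolding restricted_entries_def by simp
  moreover have "A m s \<in> Y s" if "s \<in> J" for s
    using A[of m s] m_pos that unfolding restricted_entries_def by simp
  ultimately show "A \<in> entrywise E \<and> A 0 m \<in> X \<and> (\<forall>s\<in>J. A m s \<in> Y s)"
    unfolding entrywise_def by blast
next
  assume "A \<in> entrywise E \<and> A 0 m \<in> X \<and> (\<forall>s\<in>J. A m s \<in> Y s)"
  then show "A \<in> entrywise (restricted_entries X Y)"
    unfolding entrywise_def restricted_entries_def by auto
qed

lemma corner_sets_subset_E: "{0} \<subseteq> E 0 m" "nonzero_multiples \<subseteq> E 0 m"
proof -
  have "e ! 0 - 1 = 1"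
    using nth_e[of 0] m_less by simp
  then have "0 \<le> a \<Longrightarrow> a < P \<Longrightarrow> P * a \<in> E 0 m" for a
    using mem_E_upper[of 0 m a] m_pos m_less by simp
  then show "{0} \<subseteq> E 0 m" "nonzero_multiples \<subseteq> E 0 m"
    using P_ge_2 unfolding nonzero_multiples_def by (force, auto)
qed

lemma row_m_sets_subset_E:
  assumes "s \<in> J"
  shows "residue_lifts j0 s \<subseteq> E m s" "unit_entries j0 s \<subseteq> E m s"
proof -
  have "e ! m - 1 = \<beta> - 1"
    using nth_e[of m] m_pos m_less by simp
  then have mem: "0 \<le> a \<Longrightarrow> a < P ^ (\<beta> - 1) \<Longrightarrow> P * a \<in> E m s" for a
    using mem_E_upper[of m s a] assms by simp
  have "1 < P ^ (\<beta> - 1)"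
    using P_ge_2 \<beta> by (intro one_less_power) auto
  then show "residue_lifts j0 s \<subseteq> E m s" "unit_entries j0 s \<subseteq> E m s"
    using mem[of 0] mem[of 1] mem P_ge_2 unfolding residue_lifts_def unit_entries_def by auto
qed

lemma mem_residue_branch:
  "A \<in> entrywise (restricted_entries {0} (residue_lifts j0)) \<longleftrightarrow>
    A \<in> entrywise E \<and> A 0 m = 0 \<and> (\<forall>s\<in>J. A m s \<in> residue_lifts j0 s)"
  using mem_entrywise_restricted_entries[of "{0}" "residue_lifts j0"]
    corner_sets_subset_E row_m_sets_subset_E by simp

lemma mem_unit_branch:
  "A \<in> entrywise (restricted_entries nonzero_multiples (unit_entries j0)) \<longleftrightarrow>
    A \<in> entrywise E \<and> A 0 m \<in> nonzero_multiples \<and> (\<forall>s\<in>J. A m s \<in> unit_entries j0 s)"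
  using mem_entrywise_restricted_entries[of nonzero_multiples "unit_entries j0"]
    corner_sets_subset_E row_m_sets_subset_E by simp

lemma solutions_decomposition:
  "{A \<in> entrywise E. product_condition P n m \<beta> A} =
     (\<Union>j0\<in>insert 0 J. entrywise (restricted_entries {0} (residue_lifts j0))) \<union>
     (\<Union>j0\<in>insert 0 J. entrywise (restricted_entries nonzero_multiples (unit_entries j0)))"
  (is "?lhs = ?rhs")
proof (rule set_eqI)
  fix A
  show "A \<in> ?lhs \<longleftrightarrow> A \<in> ?rhs"
  proof (cases "A \<in> entrywise E")
    case True
    show ?thesis
      unfolding UN_iff Un_iff mem_Collect_eq mem_residue_branch mem_unit_branch product_condition_iff[OF True]
      using True by blast
  next
    case False
    then show ?thesis
      unfolding UN_iff Un_iff mem_Collect_eq mem_residue_branch mem_unit_branch by blast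
  qed
qed

lemma card_multiples_below:
  assumes "0 < k"
  shows "card {P * a |a. 0 \<le> P * a \<and> P * a < P ^ k} = p ^ (k - 1)"
proof -
  have "P ^ k = P * P ^ (k - 1)"
    using assms by (simp flip: power_Suc)
  then have "{P * a |a. 0 \<le> P * a \<and> P * a < P ^ k} = (\<lambda>a. P * a) ` {0..<P ^ (k - 1)}"
    using P_ge_2 by (auto simp: zero_le_mult_iff)
  moreover have "inj_on (\<lambda>a. P * a) {0..<P ^ (k - 1)}"
    using P_ge_2 by (auto intro: inj_onI)
  ultimately show ?thesis
    by (simp add: card_image flip: of_nat_power)
qed

lemma finite_E: "finite (E r s)"
  by (rule finite_subset[of _ "{0..P ^ (e ! r)} \<union> {0, 1}"]) (auto simp: entry_set_def Let_def)

lemma card_E: "card (E r s) = (if r = 0 \<and> 0 < s \<and> s < n - 1 then p else if r = m \<and> s \<in> J then p ^ (\<beta> - 1) else 1)"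
proof (cases "r < s \<and> s < n - 1")
  case True
  then have "card (E r s) = p ^ (e ! r - 1)"
    using E_upper card_multiples_below \<beta> by (simp add: nth_e)
  then show ?thesis
    using True nth_e[of r] by auto
next
  case False
  then consider "s < r \<or> n \<le> r \<or> n \<le> s" | "r < n" "s = n - 1" | "r = s" "s < n - 1"
    by linarith
  then have "card (E r s) = 1"
    by cases (use E_zero E_last[of r] E_diag[of r] in auto)
  then show ?thesis
    using False by auto
qed

lemma prod_card_restricted_row_0:
  "(\<Prod>s<n. card (restricted_entries X Y 0 s)) = card X * p ^ (n - 3)"
proof -
  have "(\<Prod>s<n. card (restricted_entries X Y 0 s)) =
      card (restricted_entries X Y 0 m) * (\<Prod>s\<in>{..<n} - {m}. card (restricted_entries X Y 0 s))"
    using m_less by (intro prod.remove) auto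
  also have "card (restricted_entries X Y 0 m) = card X"
    by (simp add: restricted_entries_def)
  also have "(\<Prod>s\<in>{..<n} - {m}. card (restricted_entries X Y 0 s)) =
      (\<Prod>s\<in>{..<n} - {m}. if s \<in> {0<..<n - 1} then p else 1)"
    using m_pos by (intro prod.cong) (auto simp: restricted_entries_def card_E)
  also have "\<dots> = p ^ card (({..<n} - {m}) \<inter> {0<..<n - 1})"
    by (rule prod_if_const) simp
  also have "({..<n} - {m}) \<inter> {0<..<n - 1} = {0<..<n - 1} - {m}"
    by auto
  also have "card \<dots> = n - 3"
    using m_pos m_less by (simp add: card_Diff_singleton)
  finally show ?thesis .
qed

lemma prod_card_restricted_row_m:
  assumes "\<And>s. s \<in> J \<Longrightarrow> card (Y s) = c"
  shows "(\<Prod>s<n. card (restricted_entries X Y m s)) = c ^ (n - 2 - m)"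
proof -
  have "(\<Prod>s<n. card (restricted_entries X Y m s)) = (\<Prod>s<n. if s \<in> J then c else 1)"
    using m_pos assms by (intro prod.cong) (auto simp: restricted_entries_def card_E)
  also have "\<dots> = c ^ card ({..<n} \<inter> J)"
    by (rule prod_if_const) simp
  also have "{..<n} \<inter> J = J"
    by auto
  finally show ?thesis
    by simp
qed

lemma card_entrywise_restricted_entries:
  assumes X: "finite X" and Y: "\<And>s. s \<in> J \<Longrightarrow> finite (Y s) \<and> card (Y s) = c"
  shows "finite (entrywise (restricted_entries X Y))"
    "card (entrywise (restricted_entries X Y)) = card X * p ^ (n - 3) * c ^ (n - 2 - m)"
proof -
  let ?R = "restricted_entries X Y"
  have zero: "?R r s = {0}" if "n \<le> r \<or> n \<le> s" for r s
    using that E_zero m_less unfolding restricted_entries_def by auto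
  have fin: "finite (?R r s)" for r s
    using X Y finite_E unfolding restricted_entries_def by auto
  show "finite (entrywise ?R)"
    by (rule card_entrywise(1)[OF zero fin])
  have "(\<Prod>r<n. \<Prod>s<n. card (?R r s)) = (\<Prod>r\<in>{0, m}. \<Prod>s<n. card (?R r s))"
    using m_less by (intro prod.mono_neutral_right) (auto simp: restricted_entries_def card_E)
  also have "\<dots> = card X * p ^ (n - 3) * c ^ (n - 2 - m)"
    using m_pos prod_card_restricted_row_0 prod_card_restricted_row_m Y by simp
  finally show "card (entrywise ?R) = card X * p ^ (n - 3) * c ^ (n - 2 - m)"
    using card_entrywise(2)[OF zero fin] by simp
qed

lemma card_residue_lifts: "finite (residue_lifts j0 s)" "card (residue_lifts j0 s) = p"
proof -
  define c :: int where "c = (if s = j0 then 1 else 0)"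
  have "1 < P ^ (\<beta> - 2)"
    using P_ge_2 \<beta> by (intro one_less_power) auto
  with P_ge_2 have c: "0 \<le> c" "c < P ^ (\<beta> - 2)"
    unfolding c_def by auto
  have "P ^ (\<beta> - 1) = P ^ (\<beta> - 2) * P"
    using \<beta> by (simp flip: power_Suc2 add: Suc_diff_Suc numeral_2_eq_2)
  then have "residue_lifts j0 s = (\<lambda>d. P * d) ` {d. 0 \<le> d \<and> d < P ^ (\<beta> - 2) * P \<and> d mod P ^ (\<beta> - 2) = c}"
    unfolding residue_lifts_def c_def by auto
  moreover have "inj_on (\<lambda>d. P * d) A" for A
    using P_ge_2 by (auto intro: inj_onI)
  moreover have "card {d. 0 \<le> d \<and> d < P ^ (\<beta> - 2) * P \<and> d mod P ^ (\<beta> - 2) = c} = p"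
    using card_residue_class[OF c, of P] by simp
  ultimately show "card (residue_lifts j0 s) = p" "finite (residue_lifts j0 s)"
    using p by (auto simp: card_image card_gt_0_iff[symmetric] intro!: card_ge_0_finite prime_gt_0_nat)
qed

lemma card_nonzero_multiples: "finite nonzero_multiples" "card nonzero_multiples = p - 1"
proof -
  have "nonzero_multiples = (\<lambda>a. P * a) ` {1..<P}"
    unfolding nonzero_multiples_def by force
  moreover have "inj_on (\<lambda>a. P * a) {1..<P}"
    using P_ge_2 by (auto intro: inj_onI)
  ultimately show "finite nonzero_multiples" "card nonzero_multiples = p - 1"
    by (simp_all add: card_image nat_diff_distrib)
qed

lemma residue_lifts_disjoint: "(s = j0) \<noteq> (s = j1) \<Longrightarrow> residue_lifts j0 s \<inter> residue_lifts j1 s = {}"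
  using P_ge_2 unfolding residue_lifts_def by auto

lemma unit_entries_disjoint: "(s = j0) \<noteq> (s = j1) \<Longrightarrow> unit_entries j0 s \<inter> unit_entries j1 s = {}"
  using P_ge_2 unfolding unit_entries_def by auto

lemma separating_index:
  assumes "j0 \<in> insert 0 J" "j1 \<in> insert 0 J" "j0 \<noteq> j1"
  obtains s where "s \<in> J" "(s = j0) \<noteq> (s = j1)"
proof (cases "j0 \<in> J")
  case False
  then have "j1 \<in> J" "j1 \<noteq> j0"
    using assms by auto
  then show ?thesis
    using that by blast
qed (use assms(3) that in blast)

lemma card_residue_branches:
  "finite (\<Union>j0\<in>insert 0 J. entrywise (restricted_entries {0} (residue_lifts j0)))"
  "card (\<Union>j0\<in>insert 0 J. entrywise (restricted_entries {0} (residue_lifts j0))) =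
     (n - 1 - m) * (p ^ (n - 3) * p ^ (n - 2 - m))"
proof -
  let ?R = "\<lambda>j0. entrywise (restricted_entries {0} (residue_lifts j0))"
  have card_R: "finite (?R j0)" "card (?R j0) = p ^ (n - 3) * p ^ (n - 2 - m)" for j0
    using card_entrywise_restricted_entries[of "{0}" "residue_lifts j0" p] card_residue_lifts by auto
  have "?R j0 \<inter> ?R j1 = {}" if j: "j0 \<in> insert 0 J" "j1 \<in> insert 0 J" "j0 \<noteq> j1" for j0 j1
  proof -
    obtain s where "s \<in> J" "(s = j0) \<noteq> (s = j1)"
      using separating_index[OF j] .
    moreover have "A m s \<in> residue_lifts j0 s \<inter> residue_lifts j1 s" if "A \<in> ?R j0" "A \<in> ?R j1" for A
      using that \<open>s \<in> J\<close> unfolding mem_residue_branch by blast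
    ultimately show ?thesis
      using residue_lifts_disjoint[of s j0 j1] by blast
  qed
  then have "card (\<Union>j0\<in>insert 0 J. ?R j0) = (\<Sum>j0\<in>insert 0 J. card (?R j0))"
    using card_R by (intro card_UN_disjoint) auto
  also have "\<dots> = card (insert 0 J) * (p ^ (n - 3) * p ^ (n - 2 - m))"
    using card_R by simp
  also have "card (insert 0 J) = n - 1 - m"
    using m_pos m_less by simp
  finally show "card (\<Union>j0\<in>insert 0 J. ?R j0) = (n - 1 - m) * (p ^ (n - 3) * p ^ (n - 2 - m))" .
  show "finite (\<Union>j0\<in>insert 0 J. ?R j0)"
    using card_R by simp
qed

lemma card_unit_branches:
  "finite (\<Union>j0\<in>insert 0 J. entrywise (restricted_entries nonzero_multiples (unit_entries j0)))"
  "card (\<Union>j0\<in>insert 0 J. entrywise (restricted_entries nonzero_multiples (unit_entries j0))) =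
     (n - 1 - m) * ((p - 1) * p ^ (n - 3))"
proof -
  let ?U = "\<lambda>j0. entrywise (restricted_entries nonzero_multiples (unit_entries j0))"
  have card_U: "finite (?U j0)" "card (?U j0) = (p - 1) * p ^ (n - 3)" for j0
    using card_entrywise_restricted_entries[of nonzero_multiples "unit_entries j0" 1]
      card_nonzero_multiples by (auto simp: unit_entries_def)
  have "?U j0 \<inter> ?U j1 = {}" if j: "j0 \<in> insert 0 J" "j1 \<in> insert 0 J" "j0 \<noteq> j1" for j0 j1
  proof -
    obtain s where "s \<in> J" "(s = j0) \<noteq> (s = j1)"
      using separating_index[OF j] .
    moreover have "A m s \<in> unit_entries j0 s \<inter> unit_entries j1 s" if "A \<in> ?U j0" "A \<in> ?U j1" for A
      using that \<open>s \<in> J\<close> unfolding mem_unit_branch by blast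
    ultimately show ?thesis
      using unit_entries_disjoint[of s j0 j1] by blast
  qed
  then have "card (\<Union>j0\<in>insert 0 J. ?U j0) = (\<Sum>j0\<in>insert 0 J. card (?U j0))"
    using card_U by (intro card_UN_disjoint) auto
  also have "\<dots> = card (insert 0 J) * ((p - 1) * p ^ (n - 3))"
    using card_U by simp
  also have "card (insert 0 J) = n - 1 - m"
    using m_pos m_less by simp
  finally show "card (\<Union>j0\<in>insert 0 J. ?U j0) = (n - 1 - m) * ((p - 1) * p ^ (n - 3))" .
  show "finite (\<Union>j0\<in>insert 0 J. ?U j0)"
    using card_U by simp
qed

lemma card_solutions:
  "card {A \<in> entrywise E. product_condition P n m \<beta> A} =
     (n - 1 - m) * (p ^ (n - 3) * p ^ (n - 2 - m) + (p - 1) * p ^ (n - 3))"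
proof -
  have "0 \<notin> nonzero_multiples"
    using P_ge_2 unfolding nonzero_multiples_def by auto
  then have "A \<notin> entrywise (restricted_entries nonzero_multiples (unit_entries j1))"
    if "A \<in> entrywise (restricted_entries {0} (residue_lifts j0))" for A j0 j1
    using that unfolding mem_residue_branch mem_unit_branch by auto
  then have disjoint: "(\<Union>j0\<in>insert 0 J. entrywise (restricted_entries {0} (residue_lifts j0))) \<inter>
      (\<Union>j0\<in>insert 0 J. entrywise (restricted_entries nonzero_multiples (unit_entries j0))) = {}"
    by blast
  show ?thesis
    unfolding solutions_decomposition distrib_left card_residue_branches(2)[symmetric]
      card_unit_branches(2)[symmetric]
    by (rule card_Un_disjoint[OF card_residue_branches(1) card_unit_branches(1) disjoint])
qed

lemma g_two_beta_composition:
  "g e p = (n - 1 - m) * (p ^ (n - 3) * p ^ (n - 2 - m) + (p - 1) * p ^ (n - 3))"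
  unfolding g_def subring_matrices_eq by (rule card_solutions)

end

lemma S2beta_eq_image: "S2beta n \<beta> = two_beta_composition n \<beta> ` {1..<n - 1}"
proof (intro set_eqI iffI)
  fix \<alpha> assume "\<alpha> \<in> S2beta n \<beta>"
  then obtain k where k: "k \<in> {2..n - 1}" and "length \<alpha> = n - 1"
    and "\<forall>i<n - 1. \<alpha> ! i = (if i = 0 then 2 else if i = k - 1 then \<beta> else 1)"
    unfolding S2beta_def by blast
  then have "\<alpha> = two_beta_composition n \<beta> (k - 1)"
    by (intro nth_equalityI) (auto simp: two_beta_composition_def)
  moreover have "k - 1 \<in> {1..<n - 1}"
    using k by auto
  ultimately show "\<alpha> \<in> two_beta_composition n \<beta> ` {1..<n - 1}" ..
next
  fix \<alpha> assume "\<alpha> \<in> two_beta_composition n \<beta> ` {1..<n - 1}"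
  then obtain m where "m \<in> {1..<n - 1}" "\<alpha> = two_beta_composition n \<beta> m" ..
  then show "\<alpha> \<in> S2beta n \<beta>"
    unfolding S2beta_def two_beta_composition_def by (intro CollectI conjI bexI[of _ "m + 1"]) auto
qed

lemma inj_on_two_beta_composition:
  assumes "\<beta> \<noteq> 1"
  shows "inj_on (two_beta_composition n \<beta>) {1..<n - 1}"
proof
  fix m1 m2 assume m: "m1 \<in> {1..<n - 1}" "m2 \<in> {1..<n - 1}"
    and eq: "two_beta_composition n \<beta> m1 = two_beta_composition n \<beta> m2"
  have "two_beta_composition n \<beta> m2 ! m1 = \<beta>"
    using m arg_cong[OF eq, of "\<lambda>\<alpha>. \<alpha> ! m1"] by (simp add: two_beta_composition_def)
  then show "m1 = m2"
    using m assms by (auto simp: two_beta_composition_def split: if_splits)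
qed

lemma sum_weighted_powers:
  fixes x :: real
  shows "(\<Sum>r<N. real (r + 1) * x ^ r) * (x - 1)\<^sup>2 = real N * x ^ (N + 1) - real (N + 1) * x ^ N + 1"
proof (induction N)
  case (Suc N)
  then show ?case
    by (simp add: distrib_right power2_eq_square algebra_simps)
qed simp

lemma sum_first_naturals_choose: "(\<Sum>r<N. r + 1) = (N + 1) choose 2"
  by (induction N) (simp_all add: numeral_2_eq_2)

lemma sum_arithmetico_geometric:
  fixes x :: real
  assumes "x \<noteq> 1"
  shows "(\<Sum>r<N. real (r + 1) * (x ^ (N - 1) * x ^ r + (x - 1) * x ^ (N - 1))) =
    x ^ (N - 1) * (real N * x ^ (N + 1) - real (N + 1) * x ^ N + 1) / (x - 1)\<^sup>2
    + (x - 1) * x ^ (N - 1) * real ((N + 1) choose 2)"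
proof -
  have "(\<Sum>r<N. real (r + 1) * (x ^ (N - 1) * x ^ r + (x - 1) * x ^ (N - 1))) =
      (\<Sum>r<N. x ^ (N - 1) * (real (r + 1) * x ^ r) + (x - 1) * x ^ (N - 1) * real (r + 1))"
    by (intro sum.cong refl) (simp add: algebra_simps)
  also have "\<dots> = x ^ (N - 1) * (\<Sum>r<N. real (r + 1) * x ^ r) + (x - 1) * x ^ (N - 1) * (\<Sum>r<N. real (r + 1))"
    by (simp only: sum.distrib sum_distrib_left)
  also have "(\<Sum>r<N. real (r + 1) * x ^ r) = (real N * x ^ (N + 1) - real (N + 1) * x ^ N + 1) / (x - 1)\<^sup>2"
    using sum_weighted_powers[of x N] assms by (simp add: field_simps)
  also have "(\<Sum>r<N. real (r + 1)) = real ((N + 1) choose 2)"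
    by (simp only: sum_first_naturals_choose[symmetric] of_nat_sum of_nat_add of_nat_1)
  finally show ?thesis
    by simp
qed

lemma sum_two_beta_counts:
  fixes p n :: nat
  assumes p: "2 \<le> p" and n: "3 \<le> n"
  shows "(\<Sum>m\<in>{1..<n - 1}. real ((n - 1 - m) * (p ^ (n - 3) * p ^ (n - 2 - m) + (p - 1) * p ^ (n - 3)))) =
     (real p ^ (n - 3) * ((real n - 2) * real p ^ (n - 1) - (real n - 1) * real p ^ (n - 2) + 1))
        / (real p - 1) ^ 2
     + (real p - 1) * real p ^ (n - 3) * real ((n - 1) choose 2)"
proof -
  define N where "N = n - 2"
  have n_eq: "n - 3 = N - 1" "n - 1 = N + 1" "n - 2 = N" "real n - 2 = real N" "real n - 1 = real (N + 1)"
    using n unfolding N_def by auto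
  have "(\<Sum>m\<in>{1..<n - 1}. real ((n - 1 - m) * (p ^ (n - 3) * p ^ (n - 2 - m) + (p - 1) * p ^ (n - 3)))) =
      (\<Sum>r<N. real ((r + 1) * (p ^ (N - 1) * p ^ r + (p - 1) * p ^ (N - 1))))"
  proof (rule sum.reindex_bij_witness[of _ "\<lambda>r. n - 2 - r" "\<lambda>m. n - 2 - m"])
    fix m assume "m \<in> {1..<n - 1}"
    then have "n - 2 - m + 1 = n - 1 - m"
      by auto
    then show "real ((n - 2 - m + 1) * (p ^ (N - 1) * p ^ (n - 2 - m) + (p - 1) * p ^ (N - 1))) =
        real ((n - 1 - m) * (p ^ (n - 3) * p ^ (n - 2 - m) + (p - 1) * p ^ (n - 3)))"
      by (simp only: n_eq(1))
  qed (auto simp: N_def)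
  also have "\<dots> = (\<Sum>r<N. real (r + 1) * (real p ^ (N - 1) * real p ^ r + (real p - 1) * real p ^ (N - 1)))"
    using p by (intro sum.cong refl) (simp add: of_nat_diff ring_distribs)
  also have "\<dots> = real p ^ (N - 1) * (real N * real p ^ (N + 1) - real (N + 1) * real p ^ N + 1) / (real p - 1)\<^sup>2
      + (real p - 1) * real p ^ (N - 1) * real ((N + 1) choose 2)"
    using p by (intro sum_arithmetico_geometric) simp
  finally show ?thesis
    unfolding n_eq .
qed

theorem corollary4p5:
  fixes n \<beta> p :: nat
  assumes "n \<ge> 3" and "\<beta> > 2" and "prime p"
  shows "(\<Sum>\<alpha>\<in>S2beta n \<beta>. real (g \<alpha> p)) =
     (real p ^ (n - 3) * ((real n - 2) * real p ^ (n - 1) - (real n - 1) * real p ^ (n - 2) + 1))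
        / (real p - 1) ^ 2
     + (real p - 1) * real p ^ (n - 3) * real ((n - 1) choose 2)"
proof -
  have "(\<Sum>\<alpha>\<in>S2beta n \<beta>. real (g \<alpha> p)) = (\<Sum>m\<in>{1..<n - 1}. real (g (two_beta_composition n \<beta> m) p))"
    unfolding S2beta_eq_image using inj_on_two_beta_composition[of \<beta> n] assms(2) by (simp add: sum.reindex)
  also have "\<dots> = (\<Sum>m\<in>{1..<n - 1}. real ((n - 1 - m) * (p ^ (n - 3) * p ^ (n - 2 - m) + (p - 1) * p ^ (n - 3))))"
  proof (intro sum.cong refl)
    fix m assume "m \<in> {1..<n - 1}"
    then interpret two_beta_setting p n m \<beta>
      using assms by unfold_locales auto
    show "real (g e p) = real ((n - 1 - m) * (p ^ (n - 3) * p ^ (n - 2 - m) + (p - 1) * p ^ (n - 3)))"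
      by (simp only: g_two_beta_composition)
  qed
  also have "\<dots> = (real p ^ (n - 3) * ((real n - 2) * real p ^ (n - 1) - (real n - 1) * real p ^ (n - 2) + 1))
        / (real p - 1) ^ 2 + (real p - 1) * real p ^ (n - 3) * real ((n - 1) choose 2)"
    by (rule sum_two_beta_counts[OF prime_ge_2_nat[OF assms(3)] assms(1)])
  finally show ?thesis .
qed

end
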